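(* Let $\mathbb V$ be a $k$-module over a linear space $\mathbb W$ admitting a $\mu$-multiplicative basis $\mathfrak B=\{v_i\}_{i\in I}$ with respect to the basis $\mathfrak B'=\{w_j\}_{j\in J}$ of $\mathbb W$. Then $\mathbb V$ is minimal if and only if all elements of $I$ are connected to each other (i.e. $I/\sim$ consists of a single class).
   Context: Fix integers $n\ge 2$ and $1\le k\le n$ and an arbitrary field $\mathbb F$; $S_n$ denotes the symmetric group on $n$ letters. A $k$-module over a linear space $\mathbb W$ is an $\mathbb F$-vector space $\mathbb V$ (the dimensions of $\mathbb V$ and $\mathbb W$ are arbitrary, possibly infinite) together with, for every $\sigma\in S_n$, an $n$-linear map $\mathbb V^k\times\mathbb W^{n-k}\to\mathbb V$, $(x_1,\dots,x_k,y_{k+1},\dots,y_n)\mapsto[x_1,\dots,x_k,y_{k+1},\dots,y_n]_\sigma$ (interpreted as an $n$-ary bracket in which the $l$-th argument is placed in position $\sigma(l)$). A $k$-submodule of $\mathbb V$ is a linear subspace $U$ such that $[u,x_2,\dots,x_k,y_{k+1},\dots,y_n]_\sigma\in U$ for all $\sigma\in S_n$, $u\in U$, $x_l\in\mathbb V$, $y_l\in\mathbb W$. A basis $\mathfrak B=\{v_i\}_{i\in I}$ of $\mathbb V$ is multiplicative (with respect to a basis $\mathfrak B'=\{w_j\}_{j\in J}$ of $\mathbb W$) if for all $\sigma\in S_n$, $i_1,\dots,i_k\in I$, $j_{k+1},\dots,j_n\in J$, the element $[v_{i_1},\dots,v_{i_k},w_{j_{k+1}},\dots,w_{j_n}]_\sigma$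 lies in $\mathbb F v_r$ for some $r\in I$. A $k$-submodule $U$ admits a multiplicative basis inherited from $\mathfrak B$ if some subset of $\mathfrak B$ is a basis of $U$. $\mathbb V$ (with multiplicative basis $\mathfrak B$) is minimal if the only nonzero $k$-submodule of $\mathbb V$ admitting a multiplicative basis inherited from $\mathfrak B$ is $\mathbb V$ itself. Index machinery: let $\overline I=\{\overline i:i\in I\}$ and $\overline J=\{\overline j:j\in J\}$ be sets of new symbols disjoint from $I$ and $J$, with the convention $\overline{\overline x}=x$. For $\sigma\in S_n$, $i_1,\dots,i_k\in I$, $j_{k+1},\dots,j_n\in J$, let $a_\sigma(i_1,\dots,i_k,j_{k+1},\dots,j_n)=\emptyset$ if $[v_{i_1},\dots,v_{i_k},w_{j_{k+1}},\dots,w_{j_n}]_\sigma=0$ and $=\{r\}$ if this bracket is a nonzero element of $\mathbb F v_r$. For $i,i_2,\dots,i_k\in I$, $j_{k+1},\dots,j_n\in J$ let $b_\sigma(i,\overline i_2,\dots,\overline i_k,\overline j_{k+1},\dots,\overline j_n)=\{i'\in I: a_\sigma(i',i_2,\dots,i_k,j_{k+1},\dots,j_n)=\{i\}\}$. For $i\in I$, $X=(x_2,\dots,x_k)\in(I\,\dot\cup\,\overline I)^{k-1}$, $Y=(y_{k+1},\dots,y_n)\in(J\,\dot\cup\,\overline J)^{n-k}$ define $\mu(i,X,Y)\subseteq I$ by: $\mu(i,X,Y)=\bigcup_{\sigma\in S_n}a_\sigma(i,X,Y)$ if all $x_l\in I$ and all $y_l\in J$; $\mu(i,X,Y)=\bigcup_{\sigma\in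 S_n}b_\sigma(i,X,Y)$ if all $x_l\in\overline I$ and all $y_l\in\overline J$; and $\mu(i,X,Y)=\emptyset$ otherwise. For $\mathfrak A\subseteq I$ set $\phi(\mathfrak A,X,Y)=\bigcup_{i\in\mathfrak A}\mu(i,X,Y)$. $\mu$-multiplicativity: a multiplicative basis $\mathfrak B$ is $\mu$-multiplicative if whenever $i,i'\in I$ satisfy $i'\in\mu(i,X,Y)$ for some $X\in(I\,\dot\cup\,\overline I)^{k-1}$, $Y\in(J\,\dot\cup\,\overline J)^{n-k}$, then $v_{i'}$ belongs to the linear span of $\{[v_i,x_2,\dots,x_k,y_{k+1},\dots,y_n]_\sigma:\sigma\in S_n,\ x_l\in\mathbb V,\ y_l\in\mathbb W\}$. Connections: for distinct $i,i'\in I$, a connection from $i$ to $i'$ is a finite sequence $(X_1,Y_1,\dots,X_t,Y_t)$, $t\ge1$, with $X_m\in(I\,\dot\cup\,\overline I)^{k-1}$ and $Y_m\in(J\,\dot\cup\,\overline J)^{n-k}$, such that, setting $\mathfrak A_0=\{i\}$ and $\mathfrak A_m=\phi(\mathfrak A_{m-1},X_m,Y_m)$, one has $\mathfrak A_m\neq\emptyset$ for $1\le m\le t-1$ and $i'\in\mathfrak A_t$. We say $i$ is connected to $i'$ if such a connection exists; by convention every $i\in I$ is connected to itself. This relation, written $i\sim i'$, is an equivalence relation on $I$. *)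

theory Defs
  imports Complex_Main "HOL-Combinatorics.Permutations"
begin

text \<open>The field is a type 'f::field, V is the whole type 'v (scalar
multiplication scV) and W is the whole type 'w (scalar multiplication scW).
The family of brackets is br: for a permutation sg of {1..n}, br sg xs ys is
the bracket with V-arguments xs 1, ..., xs k and W-arguments ys (k+1), ..., ys n
(values of xs, ys outside these ranges are irrelevant).
An element of I disjoint-union I-bar is encoded as (i, b) with i in I, where
b = True means the barred copy; likewise for J.\<close>

definition is_kmodule ::
  "('f::field \<Rightarrow> 'v::ab_group_add \<Rightarrow> 'v) \<Rightarrow> ('f \<Rightarrow> 'w::ab_group_add \<Rightarrow> 'w) \<Rightarrow> nat \<Rightarrow> nat
   \<Rightarrow> ((nat \<Rightarrow> nat) \<Rightarrow> (nat \<Rightarrow> 'v) \<Rightarrow> (nat \<Rightarrow> 'w) \<Rightarrow> 'v) \<Rightarrow> bool" where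
  "is_kmodule scV scW n k br \<longleftrightarrow>
     vector_space scV \<and> vector_space scW \<and> 2 \<le> n \<and> 1 \<le> k \<and> k \<le> n \<and>
     (\<forall>sg. sg permutes {1..n} \<longrightarrow>
        (\<forall>xs xs' ys ys'. (\<forall>l\<in>{1..k}. xs l = xs' l) \<longrightarrow> (\<forall>l\<in>{k+1..n}. ys l = ys' l)
            \<longrightarrow> br sg xs ys = br sg xs' ys') \<and>
        (\<forall>l\<in>{1..k}. \<forall>xs ys. Vector_Spaces.linear scV scV (\<lambda>x. br sg (xs(l := x)) ys)) \<and>
        (\<forall>l\<in>{k+1..n}. \<forall>xs ys. Vector_Spaces.linear scW scV (\<lambda>y. br sg xs (ys(l := y)))))"

definition is_basis_family :: "('f::field \<Rightarrow> 'v::ab_group_add \<Rightarrow> 'v) \<Rightarrow> ('i \<Rightarrow> 'v) \<Rightarrow> 'i set \<Rightarrow> bool" where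
  "is_basis_family sc v I \<longleftrightarrow> inj_on v I \<and> \<not> module.dependent sc (v ` I) \<and> module.span sc (v ` I) = UNIV"

definition k_submodule ::
  "('f::field \<Rightarrow> 'v::ab_group_add \<Rightarrow> 'v) \<Rightarrow> nat \<Rightarrow> nat
   \<Rightarrow> ((nat \<Rightarrow> nat) \<Rightarrow> (nat \<Rightarrow> 'v) \<Rightarrow> (nat \<Rightarrow> 'w) \<Rightarrow> 'v) \<Rightarrow> 'v set \<Rightarrow> bool" where
  "k_submodule scV n k br U \<longleftrightarrow> module.subspace scV U \<and>
     (\<forall>sg. sg permutes {1..n} \<longrightarrow> (\<forall>u\<in>U. \<forall>xs ys. br sg (xs(1 := u)) ys \<in> U))"

definition is_multiplicative ::
  "('f::field \<Rightarrow> 'v::ab_group_add \<Rightarrow> 'v) \<Rightarrow> nat \<Rightarrow> nat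
   \<Rightarrow> ((nat \<Rightarrow> nat) \<Rightarrow> (nat \<Rightarrow> 'v) \<Rightarrow> (nat \<Rightarrow> 'w) \<Rightarrow> 'v)
   \<Rightarrow> ('i \<Rightarrow> 'v) \<Rightarrow> 'i set \<Rightarrow> ('j \<Rightarrow> 'w) \<Rightarrow> 'j set \<Rightarrow> bool" where
  "is_multiplicative scV n k br v I w J \<longleftrightarrow>
     (\<forall>sg is js. sg permutes {1..n} \<longrightarrow> (\<forall>l\<in>{1..k}. is l \<in> I) \<longrightarrow> (\<forall>l\<in>{k+1..n}. js l \<in> J) \<longrightarrow>
        (\<exists>r\<in>I. \<exists>c. br sg (v \<circ> is) (w \<circ> js) = scV c (v r)))"

definition inherits_basis :: "('f::field \<Rightarrow> 'v::ab_group_add \<Rightarrow> 'v) \<Rightarrow> ('i \<Rightarrow> 'v) \<Rightarrow> 'i set \<Rightarrow> 'v set \<Rightarrow> bool" where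
  "inherits_basis scV v I U \<longleftrightarrow> (\<exists>S\<subseteq>I. \<not> module.dependent scV (v ` S) \<and> module.span scV (v ` S) = U)"

definition is_minimal ::
  "('f::field \<Rightarrow> 'v::ab_group_add \<Rightarrow> 'v) \<Rightarrow> nat \<Rightarrow> nat
   \<Rightarrow> ((nat \<Rightarrow> nat) \<Rightarrow> (nat \<Rightarrow> 'v) \<Rightarrow> (nat \<Rightarrow> 'w) \<Rightarrow> 'v) \<Rightarrow> ('i \<Rightarrow> 'v) \<Rightarrow> 'i set \<Rightarrow> bool" where
  "is_minimal scV n k br v I \<longleftrightarrow>
     (\<forall>U. k_submodule scV n k br U \<and> U \<noteq> {0} \<and> inherits_basis scV v I U \<longrightarrow> U = UNIV)"

text \<open>a_sigma(i_1..i_k, j_(k+1)..j_n): empty if the bracket is 0, {r} if it is a nonzero element of F v_r.\<close>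
definition a_idx ::
  "('f::field \<Rightarrow> 'v::ab_group_add \<Rightarrow> 'v) \<Rightarrow> ((nat \<Rightarrow> nat) \<Rightarrow> (nat \<Rightarrow> 'v) \<Rightarrow> (nat \<Rightarrow> 'w) \<Rightarrow> 'v)
   \<Rightarrow> ('i \<Rightarrow> 'v) \<Rightarrow> 'i set \<Rightarrow> ('j \<Rightarrow> 'w) \<Rightarrow> (nat \<Rightarrow> nat) \<Rightarrow> (nat \<Rightarrow> 'i) \<Rightarrow> (nat \<Rightarrow> 'j) \<Rightarrow> 'i set" where
  "a_idx scV br v I w sg is js =
     {r\<in>I. br sg (v \<circ> is) (w \<circ> js) \<noteq> 0 \<and> (\<exists>c. br sg (v \<circ> is) (w \<circ> js) = scV c (v r))}"

text \<open>b_sigma(i, bar i_2..bar i_k, bar j_(k+1)..bar j_n) = { i' in I : a_sigma(i', i_2..i_k, j..) = {i} }.\<close>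
definition b_idx ::
  "('f::field \<Rightarrow> 'v::ab_group_add \<Rightarrow> 'v) \<Rightarrow> ((nat \<Rightarrow> nat) \<Rightarrow> (nat \<Rightarrow> 'v) \<Rightarrow> (nat \<Rightarrow> 'w) \<Rightarrow> 'v)
   \<Rightarrow> ('i \<Rightarrow> 'v) \<Rightarrow> 'i set \<Rightarrow> ('j \<Rightarrow> 'w) \<Rightarrow> (nat \<Rightarrow> nat) \<Rightarrow> 'i \<Rightarrow> (nat \<Rightarrow> 'i) \<Rightarrow> (nat \<Rightarrow> 'j) \<Rightarrow> 'i set" where
  "b_idx scV br v I w sg i is js = {i'\<in>I. a_idx scV br v I w sg (is(1 := i')) js = {i}}"

text \<open>mu(i, X, Y); X uses slots 2..k, Y uses slots k+1..n.\<close>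
definition mu_idx ::
  "('f::field \<Rightarrow> 'v::ab_group_add \<Rightarrow> 'v) \<Rightarrow> nat \<Rightarrow> nat \<Rightarrow> ((nat \<Rightarrow> nat) \<Rightarrow> (nat \<Rightarrow> 'v) \<Rightarrow> (nat \<Rightarrow> 'w) \<Rightarrow> 'v)
   \<Rightarrow> ('i \<Rightarrow> 'v) \<Rightarrow> 'i set \<Rightarrow> ('j \<Rightarrow> 'w) \<Rightarrow> 'i \<Rightarrow> (nat \<Rightarrow> 'i \<times> bool) \<Rightarrow> (nat \<Rightarrow> 'j \<times> bool) \<Rightarrow> 'i set" where
  "mu_idx scV n k br v I w i X Y =
     (if (\<forall>l\<in>{2..k}. \<not> snd (X l)) \<and> (\<forall>l\<in>{k+1..n}. \<not> snd (Y l))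
      then (\<Union>sg\<in>{sg. sg permutes {1..n}}. a_idx scV br v I w sg ((fst \<circ> X)(1 := i)) (fst \<circ> Y))
      else if (\<forall>l\<in>{2..k}. snd (X l)) \<and> (\<forall>l\<in>{k+1..n}. snd (Y l))
      then (\<Union>sg\<in>{sg. sg permutes {1..n}}. b_idx scV br v I w sg i (fst \<circ> X) (fst \<circ> Y))
      else {})"

definition phi_idx ::
  "('f::field \<Rightarrow> 'v::ab_group_add \<Rightarrow> 'v) \<Rightarrow> nat \<Rightarrow> nat \<Rightarrow> ((nat \<Rightarrow> nat) \<Rightarrow> (nat \<Rightarrow> 'v) \<Rightarrow> (nat \<Rightarrow> 'w) \<Rightarrow> 'v)
   \<Rightarrow> ('i \<Rightarrow> 'v) \<Rightarrow> 'i set \<Rightarrow> ('j \<Rightarrow> 'w) \<Rightarrow> 'i set \<Rightarrow> (nat \<Rightarrow> 'i \<times> bool) \<Rightarrow> (nat \<Rightarrow> 'j \<times> bool) \<Rightarrow> 'i set" where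
  "phi_idx scV n k br v I w A X Y = (\<Union>i\<in>A. mu_idx scV n k br v I w i X Y)"

text \<open>X in (I disjoint-union I-bar)^(k-1), Y in (J disjoint-union J-bar)^(n-k).\<close>
definition valid_XY :: "nat \<Rightarrow> nat \<Rightarrow> 'i set \<Rightarrow> 'j set \<Rightarrow> (nat \<Rightarrow> 'i \<times> bool) \<Rightarrow> (nat \<Rightarrow> 'j \<times> bool) \<Rightarrow> bool" where
  "valid_XY n k I J X Y \<longleftrightarrow> (\<forall>l\<in>{2..k}. fst (X l) \<in> I) \<and> (\<forall>l\<in>{k+1..n}. fst (Y l) \<in> J)"

definition is_mu_multiplicative ::
  "('f::field \<Rightarrow> 'v::ab_group_add \<Rightarrow> 'v) \<Rightarrow> nat \<Rightarrow> nat \<Rightarrow> ((nat \<Rightarrow> nat) \<Rightarrow> (nat \<Rightarrow> 'v) \<Rightarrow> (nat \<Rightarrow> 'w) \<Rightarrow> 'v)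
   \<Rightarrow> ('i \<Rightarrow> 'v) \<Rightarrow> 'i set \<Rightarrow> ('j \<Rightarrow> 'w::ab_group_add) \<Rightarrow> 'j set \<Rightarrow> bool" where
  "is_mu_multiplicative scV n k br v I w J \<longleftrightarrow>
     is_multiplicative scV n k br v I w J \<and>
     (\<forall>i\<in>I. \<forall>i'\<in>I. \<forall>X Y. valid_XY n k I J X Y \<longrightarrow> i' \<in> mu_idx scV n k br v I w i X Y \<longrightarrow>
        v i' \<in> module.span scV {br sg (xs(1 := v i)) ys | sg xs ys. sg permutes {1..n}})"

definition conn_sets ::
  "('f::field \<Rightarrow> 'v::ab_group_add \<Rightarrow> 'v) \<Rightarrow> nat \<Rightarrow> nat \<Rightarrow> ((nat \<Rightarrow> nat) \<Rightarrow> (nat \<Rightarrow> 'v) \<Rightarrow> (nat \<Rightarrow> 'w) \<Rightarrow> 'v)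
   \<Rightarrow> ('i \<Rightarrow> 'v) \<Rightarrow> 'i set \<Rightarrow> ('j \<Rightarrow> 'w) \<Rightarrow> 'i set \<Rightarrow> ((nat \<Rightarrow> 'i \<times> bool) \<times> (nat \<Rightarrow> 'j \<times> bool)) list \<Rightarrow> 'i set" where
  "conn_sets scV n k br v I w A0 seq = foldl (\<lambda>A (X, Y). phi_idx scV n k br v I w A X Y) A0 seq"

definition connected_idx ::
  "('f::field \<Rightarrow> 'v::ab_group_add \<Rightarrow> 'v) \<Rightarrow> nat \<Rightarrow> nat \<Rightarrow> ((nat \<Rightarrow> nat) \<Rightarrow> (nat \<Rightarrow> 'v) \<Rightarrow> (nat \<Rightarrow> 'w) \<Rightarrow> 'v)
   \<Rightarrow> ('i \<Rightarrow> 'v) \<Rightarrow> 'i set \<Rightarrow> ('j \<Rightarrow> 'w) \<Rightarrow> 'j set \<Rightarrow> 'i \<Rightarrow> 'i \<Rightarrow> bool" where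
  "connected_idx scV n k br v I w J i i' \<longleftrightarrow> i = i' \<or>
     (\<exists>seq. seq \<noteq> [] \<and> (\<forall>(X, Y)\<in>set seq. valid_XY n k I J X Y) \<and>
        (\<forall>m. 1 \<le> m \<and> m < length seq \<longrightarrow> conn_sets scV n k br v I w {i} (take m seq) \<noteq> {}) \<and>
        i' \<in> conn_sets scV n k br v I w {i} seq)"

end

theory Submission
  imports Defs
begin

text \<open>A nonzero bracket of basis vectors is a multiple of some \<open>v\<^sub>r\<close> with \<open>r \<in> \<mu>(i,X,Y)\<close>, where
  \<open>v\<^sub>i\<close> sits in the first slot, so \<open>r\<close> is connected to \<open>i\<close>; by multilinearity the span of the basis
  vectors indexed by a connection class is therefore a nonzero \<open>k\<close>-submodule with inherited basis.
  If the module is minimal this span is everything, and linear independence forces the class to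
  be all of \<open>I\<close>. Conversely, \<open>\<mu>\<close>-multiplicativity says that a \<open>k\<close>-submodule containing \<open>v\<^sub>i\<close>
  contains \<open>v\<^sub>r\<close> for every \<open>r \<in> \<mu>(i,X,Y)\<close>, so a nonzero submodule with inherited basis contains
  every basis vector reachable along connections, i.e. all of them.\<close>

lemma (in vector_space) basis_index_mem_if_in_span:
  assumes "inj_on v I" "independent (v ` I)" "S \<subseteq> I" "i \<in> I" "v i \<in> span (v ` S)"
  shows "i \<in> S"
proof (rule ccontr)
  assume "i \<notin> S"
  then have "v ` S \<subseteq> v ` I - {v i}"
    using assms(1,3,4) by (auto simp: inj_on_def)
  then have "v i \<in> span (v ` I - {v i})"
    using assms(5) span_mono by blast
  then show False
    using assms(2,4) unfolding dependent_def by blast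
qed

lemma (in vector_space) inherits_basis_span:
  assumes "independent (v ` I)" "S \<subseteq> I"
  shows "inherits_basis scale v I (span (v ` S))"
  unfolding inherits_basis_def
  using assms(2) independent_mono[OF assms(1) image_mono[OF assms(2)]] by blast

lemma bracket_in_subspace_if_generators:
  assumes km: "is_kmodule scV scW n k br" and sg: "sg permutes {1..n}"
    and U: "module.subspace scV U"
    and xs: "\<forall>l\<in>{1..k}. xs l \<in> module.span scV (X l)"
    and ys: "\<forall>l\<in>{k+1..n}. ys l \<in> module.span scW (Y l)"
    and gen: "\<And>xs ys. \<forall>l\<in>{1..k}. xs l \<in> X l \<Longrightarrow> \<forall>l\<in>{k+1..n}. ys l \<in> Y l \<Longrightarrow> br sg xs ys \<in> U"
  shows "br sg xs ys \<in> U"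
proof -
  interpret V: vector_space scV using km by (simp add: is_kmodule_def)
  interpret W: vector_space scW using km by (simp add: is_kmodule_def)
  have linV: "\<And>l xs ys. l \<in> {1..k} \<Longrightarrow> Vector_Spaces.linear scV scV (\<lambda>x. br sg (xs(l := x)) ys)"
    and linW: "\<And>l xs ys. l \<in> {k+1..n} \<Longrightarrow> Vector_Spaces.linear scW scV (\<lambda>y. br sg xs (ys(l := y)))"
    using km sg by (auto simp: is_kmodule_def)
  note subspace_vimage = module_hom.subspace_vimage[OF module_hom_iff_linear[THEN iffD2]]
  \<comment> \<open>the arguments in slots \<open>\<le> m\<close> range over the spans, the others over the generators\<close>
  define XV where "XV m l = (if l \<le> m then V.span (X l) else X l)" for m l
  define YW where "YW m l = (if l \<le> m then W.span (Y l) else Y l)" for m l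
  have mixed: "br sg xs ys \<in> U"
    if "\<forall>l\<in>{1..k}. xs l \<in> XV m l" "\<forall>l\<in>{k+1..n}. ys l \<in> YW m l" for m xs ys
    using that
  proof (induction m arbitrary: xs ys)
    case 0
    then show ?case by (intro gen) (auto simp: XV_def YW_def)
  next
    case (Suc m)
    have XV_other: "XV m l = XV (Suc m) l" and YW_other: "YW m l = YW (Suc m) l"
      if "l \<noteq> Suc m" for l
      using that by (auto simp: XV_def YW_def)
    have XV_Suc: "XV m (Suc m) = X (Suc m)" and YW_Suc: "YW m (Suc m) = Y (Suc m)"
      by (simp_all add: XV_def YW_def)
    consider (V) "Suc m \<in> {1..k}" | (W) "Suc m \<in> {k+1..n}" | (none) "Suc m \<notin> {1..k} \<union> {k+1..n}"
      by blast
    then show ?case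
    proof cases
      case V
      have "X (Suc m) \<subseteq> {x. br sg (xs(Suc m := x)) ys \<in> U}"
        using Suc.prems V by (auto intro!: Suc.IH simp: XV_other YW_other XV_Suc)
      moreover have "V.subspace {x. br sg (xs(Suc m := x)) ys \<in> U}"
        using subspace_vimage[OF linV[OF V] U] by (simp add: vimage_def)
      ultimately have "V.span (X (Suc m)) \<subseteq> {x. br sg (xs(Suc m := x)) ys \<in> U}"
        by (rule V.span_minimal)
      moreover have "xs (Suc m) \<in> V.span (X (Suc m))"
        using bspec[OF Suc.prems(1) V] by (simp add: XV_def)
      ultimately show ?thesis by auto
    next
      case W
      have "Y (Suc m) \<subseteq> {y. br sg xs (ys(Suc m := y)) \<in> U}"
        using Suc.prems W by (auto intro!: Suc.IH simp: XV_other YW_other YW_Suc)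
      moreover have "W.subspace {y. br sg xs (ys(Suc m := y)) \<in> U}"
        using subspace_vimage[OF linW[OF W] U] by (simp add: vimage_def)
      ultimately have "W.span (Y (Suc m)) \<subseteq> {y. br sg xs (ys(Suc m := y)) \<in> U}"
        by (rule W.span_minimal)
      moreover have "ys (Suc m) \<in> W.span (Y (Suc m))"
        using bspec[OF Suc.prems(2) W] by (simp add: YW_def)
      ultimately show ?thesis by auto
    next
      case none
      then show ?thesis
        using Suc.prems by (intro Suc.IH) (auto simp: XV_other YW_other)
    qed
  qed
  have "k \<le> n" using km by (simp add: is_kmodule_def)
  then have "\<forall>l\<in>{1..k}. xs l \<in> XV n l"
    using xs by (simp add: XV_def)
  moreover have "\<forall>l\<in>{k+1..n}. ys l \<in> YW n l"
    using ys by (simp add: YW_def)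
  ultimately show ?thesis by (rule mixed)
qed

definition connected_class ::
  "('f::field \<Rightarrow> 'v::ab_group_add \<Rightarrow> 'v) \<Rightarrow> nat \<Rightarrow> nat \<Rightarrow> ((nat \<Rightarrow> nat) \<Rightarrow> (nat \<Rightarrow> 'v) \<Rightarrow> (nat \<Rightarrow> 'w) \<Rightarrow> 'v)
   \<Rightarrow> ('i \<Rightarrow> 'v) \<Rightarrow> 'i set \<Rightarrow> ('j \<Rightarrow> 'w) \<Rightarrow> 'j set \<Rightarrow> 'i \<Rightarrow> 'i set" where
  "connected_class scV n k br v I w J i = {x\<in>I. connected_idx scV n k br v I w J i x}"

lemma mu_idx_subset: "mu_idx scV n k br v I w i X Y \<subseteq> I"
  unfolding mu_idx_def a_idx_def b_idx_def by auto

lemma connected_idx_step: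
  assumes "connected_idx scV n k br v I w J i i1"
    and "valid_XY n k I J X Y"
    and "r \<in> mu_idx scV n k br v I w i1 X Y"
  shows "connected_idx scV n k br v I w J i r"
proof (cases "i = i1")
  case True
  then show ?thesis
    unfolding connected_idx_def using assms(2,3)
    by (intro disjI2 exI[of _ "[(X, Y)]"]) (auto simp: conn_sets_def phi_idx_def)
next
  case False
  then obtain seq where seq: "seq \<noteq> []" "\<forall>(X, Y)\<in>set seq. valid_XY n k I J X Y"
    "\<forall>m. 1 \<le> m \<and> m < length seq \<longrightarrow> conn_sets scV n k br v I w {i} (take m seq) \<noteq> {}"
    "i1 \<in> conn_sets scV n k br v I w {i} seq"
    using assms(1) unfolding connected_idx_def by blast
  have "conn_sets scV n k br v I w {i} (take m (seq @ [(X, Y)])) \<noteq> {}"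
    if "1 \<le> m" "m < length (seq @ [(X, Y)])" for m
  proof (cases "m < length seq")
    case True
    then show ?thesis using seq(3) that by simp
  next
    case False
    then have "m = length seq" using that by simp
    then show ?thesis using seq(4) by auto
  qed
  moreover have "r \<in> conn_sets scV n k br v I w {i} (seq @ [(X, Y)])"
    using seq(4) assms(3) by (auto simp: conn_sets_def phi_idx_def)
  ultimately show ?thesis
    unfolding connected_idx_def using seq(2) assms(2)
    by (intro disjI2 exI[of _ "seq @ [(X, Y)]"]) auto
qed

lemma connected_idx_preserves:
  assumes closed: "\<And>i r X Y. i \<in> I \<Longrightarrow> P i \<Longrightarrow> valid_XY n k I J X Y
      \<Longrightarrow> r \<in> mu_idx scV n k br v I w i X Y \<Longrightarrow> P r"
    and conn: "connected_idx scV n k br v I w J i i'" and "i \<in> I" "P i"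
  shows "P i'"
proof -
  have "conn_sets scV n k br v I w A seq \<subseteq> {a\<in>I. P a}"
    if "A \<subseteq> {a\<in>I. P a}" "\<forall>(X, Y)\<in>set seq. valid_XY n k I J X Y" for A seq
    using that
  proof (induction seq arbitrary: A)
    case Nil
    then show ?case by (simp add: conn_sets_def)
  next
    case (Cons XY seq)
    obtain X Y where XY: "XY = (X, Y)" by fastforce
    have "phi_idx scV n k br v I w A X Y \<subseteq> {a\<in>I. P a}"
      using Cons.prems XY closed mu_idx_subset unfolding phi_idx_def by fastforce
    then show ?case
      using Cons.IH Cons.prems(2) XY by (simp add: conn_sets_def)
  qed
  then show ?thesis
    using conn \<open>i \<in> I\<close> \<open>P i\<close> unfolding connected_idx_def by blast
qed

lemma bracket_of_basis_vectors_in_mu: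
  assumes km: "is_kmodule scV scW n k br" and mult: "is_multiplicative scV n k br v I w J"
    and sg: "sg permutes {1..n}"
    and i1: "i1 \<in> I" "xs 1 = v i1"
    and xs: "\<forall>l\<in>{2..k}. xs l \<in> v ` I" and ys: "\<forall>l\<in>{k+1..n}. ys l \<in> w ` J"
    and nonzero: "br sg xs ys \<noteq> 0"
  shows "\<exists>r c X Y. valid_XY n k I J X Y \<and> r \<in> mu_idx scV n k br v I w i1 X Y \<and>
    br sg xs ys = scV c (v r)"
proof -
  define "is" where "is l = (if l = 1 then i1 else inv_into I v (xs l))" for l
  define js where "js l = inv_into J w (ys l)" for l
  have is_I: "\<forall>l\<in>{1..k}. is l \<in> I"
    using xs i1 unfolding is_def by (auto intro: inv_into_into)
  have js_J: "\<forall>l\<in>{k+1..n}. js l \<in> J"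
    using ys unfolding js_def by (auto intro: inv_into_into)
  have eq: "br sg xs ys = br sg (v \<circ> is) (w \<circ> js)"
  proof -
    have "\<forall>l\<in>{1..k}. xs l = (v \<circ> is) l"
      using xs i1 unfolding is_def by (auto simp: f_inv_into_f)
    moreover have "\<forall>l\<in>{k+1..n}. ys l = (w \<circ> js) l"
      using ys unfolding js_def by (auto simp: f_inv_into_f)
    ultimately show ?thesis
      using km sg unfolding is_kmodule_def by blast
  qed
  moreover obtain r c where r: "r \<in> I" "br sg (v \<circ> is) (w \<circ> js) = scV c (v r)"
    using mult sg is_I js_J unfolding is_multiplicative_def by blast
  ultimately have "r \<in> a_idx scV br v I w sg is js"
    using nonzero unfolding a_idx_def by auto
  moreover have "(fst \<circ> (\<lambda>l. (is l, False)))(1 := i1) = is"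
    unfolding is_def by auto
  ultimately have "r \<in> mu_idx scV n k br v I w i1 (\<lambda>l. (is l, False)) (\<lambda>l. (js l, False))"
    using sg unfolding mu_idx_def by (auto simp: comp_def)
  moreover have "valid_XY n k I J (\<lambda>l. (is l, False)) (\<lambda>l. (js l, False))"
    using is_I js_J unfolding valid_XY_def by auto
  ultimately show ?thesis
    using eq r(2) by auto
qed

lemma bracket_of_basis_vectors_in_span_connected_class:
  assumes km: "is_kmodule scV scW n k br" and mult: "is_multiplicative scV n k br v I w J"
    and sg: "sg permutes {1..n}"
    and x1: "xs 1 \<in> v ` connected_class scV n k br v I w J i"
    and xs: "\<forall>l\<in>{2..k}. xs l \<in> v ` I" and ys: "\<forall>l\<in>{k+1..n}. ys l \<in> w ` J"
  shows "br sg xs ys \<in> module.span scV (v ` connected_class scV n k br v I w J i)"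
proof -
  interpret V: vector_space scV using km by (simp add: is_kmodule_def)
  define C where "C = connected_class scV n k br v I w J i"
  show ?thesis
  proof (cases "br sg xs ys = 0")
    case True
    then show ?thesis by (simp add: V.span_zero)
  next
    case False
    obtain i1 where i1: "i1 \<in> I" "connected_idx scV n k br v I w J i i1" "xs 1 = v i1"
      using x1 by (auto simp: connected_class_def)
    obtain r c X Y where XY: "valid_XY n k I J X Y" "r \<in> mu_idx scV n k br v I w i1 X Y"
      and r: "br sg xs ys = scV c (v r)"
      using bracket_of_basis_vectors_in_mu[where xs = xs and ys = ys,
            OF km mult sg i1(1,3) xs ys, OF \<open>br sg xs ys \<noteq> 0\<close>] by blast
    have "connected_idx scV n k br v I w J i r"
      using i1(2) XY by (rule connected_idx_step)
    moreover have "r \<in> I" using mu_idx_subset XY(2) by (rule subsetD)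
    ultimately have "r \<in> C" by (simp add: C_def connected_class_def)
    then show ?thesis
      unfolding r C_def by (simp add: V.span_base V.span_scale)
  qed
qed

lemma k_submodule_span_connected_class:
  assumes km: "is_kmodule scV scW n k br"
    and basis_v: "is_basis_family scV v I" and basis_w: "is_basis_family scW w J"
    and mult: "is_multiplicative scV n k br v I w J"
  shows "k_submodule scV n k br (module.span scV (v ` connected_class scV n k br v I w J i))"
proof -
  interpret V: vector_space scV using km by (simp add: is_kmodule_def)
  interpret W: vector_space scW using km by (simp add: is_kmodule_def)
  define C where "C = connected_class scV n k br v I w J i"
  define U where "U = V.span (v ` C)"
  define G where "G l = (if l = 1 then v ` C else v ` I)" for l :: nat
  have U: "V.subspace U" unfolding U_def by simp
  have "br sg (xs(1 := u)) ys \<in> U" if sg: "sg permutes {1..n}" and "u \<in> U" for sg u xs ys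
  proof -
    have "V.span (v ` I) = UNIV" "W.span (w ` J) = UNIV"
      using basis_v basis_w by (simp_all add: is_basis_family_def)
    then have "\<forall>l\<in>{1..k}. (xs(1 := u)) l \<in> V.span (G l)" "\<forall>l\<in>{k+1..n}. ys l \<in> W.span (w ` J)"
      using \<open>u \<in> U\<close> by (simp_all add: U_def G_def)
    then show ?thesis
    proof (rule bracket_in_subspace_if_generators[where X = G and Y = "\<lambda>_. w ` J", OF km sg U])
      fix xs' ys' assume xs': "\<forall>l\<in>{1..k}. xs' l \<in> G l" and ys': "\<forall>l\<in>{k+1..n}. ys' l \<in> w ` J"
      have "1 \<le> k" using km by (simp add: is_kmodule_def)
      then have "xs' 1 \<in> v ` C" using bspec[OF xs', of 1] by (simp add: G_def)
      moreover have "\<forall>l\<in>{2..k}. xs' l \<in> v ` I"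
      proof
        fix l assume "l \<in> {2..k}"
        then show "xs' l \<in> v ` I" using bspec[OF xs', of l] by (simp add: G_def)
      qed
      ultimately show "br sg xs' ys' \<in> U"
        unfolding U_def C_def
        by (rule bracket_of_basis_vectors_in_span_connected_class[OF km mult sg _ _ ys'])
    qed
  qed
  then show ?thesis
    using U unfolding k_submodule_def U_def C_def by blast
qed

lemma k_submodule_closed_under_mu:
  assumes "vector_space scV" and mu_mult: "is_mu_multiplicative scV n k br v I w J"
    and U: "k_submodule scV n k br U"
    and "i \<in> I" "v i \<in> U" "valid_XY n k I J X Y" "r \<in> mu_idx scV n k br v I w i X Y"
  shows "v r \<in> U"
proof -
  interpret V: vector_space scV by fact
  have "V.subspace U" and "\<And>sg xs ys. sg permutes {1..n} \<Longrightarrow> br sg (xs(1 := v i)) ys \<in> U"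
    using U \<open>v i \<in> U\<close> unfolding k_submodule_def by blast+
  then have "V.span {br sg (xs(1 := v i)) ys | sg xs ys. sg permutes {1..n}} \<subseteq> U"
    by (intro V.span_minimal) auto
  moreover have "r \<in> I" using assms(7) mu_idx_subset[of scV n k br v I w i X Y] by blast
  then have "v r \<in> V.span {br sg (xs(1 := v i)) ys | sg xs ys. sg permutes {1..n}}"
    using mu_mult assms(4,6,7) unfolding is_mu_multiplicative_def by blast
  ultimately show ?thesis by blast
qed

lemma connected_if_minimal:
  assumes km: "is_kmodule scV scW n k br"
    and basis_v: "is_basis_family scV v I" and basis_w: "is_basis_family scW w J"
    and mult: "is_multiplicative scV n k br v I w J"
    and minimal: "is_minimal scV n k br v I" and "i \<in> I" "i' \<in> I"
  shows "connected_idx scV n k br v I w J i i'"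
proof -
  interpret V: vector_space scV using km by (simp add: is_kmodule_def)
  have inj: "inj_on v I" and indep: "V.independent (v ` I)"
    using basis_v by (simp_all add: is_basis_family_def)
  define C where "C = connected_class scV n k br v I w J i"
  have C: "C \<subseteq> I" "i \<in> C"
    using \<open>i \<in> I\<close> by (auto simp: C_def connected_class_def connected_idx_def)
  have "v i \<in> V.span (v ` C)"
    using C(2) by (simp add: V.span_base)
  moreover have "v i \<noteq> 0"
    using indep V.dependent_zero \<open>i \<in> I\<close> by (metis imageI)
  ultimately have "V.span (v ` C) \<noteq> {0}" by force
  moreover have "k_submodule scV n k br (V.span (v ` C))"
    unfolding C_def by (rule k_submodule_span_connected_class[OF km basis_v basis_w mult])
  moreover have "inherits_basis scV v I (V.span (v ` C))"
    by (rule V.inherits_basis_span[OF indep C(1)])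
  ultimately have "V.span (v ` C) = UNIV"
    using minimal unfolding is_minimal_def by blast
  then have "i' \<in> C"
    using V.basis_index_mem_if_in_span[OF inj indep C(1) \<open>i' \<in> I\<close>] by simp
  then show ?thesis by (simp add: C_def connected_class_def)
qed

lemma minimal_if_connected:
  assumes "vector_space scV" and basis_v: "is_basis_family scV v I"
    and mu_mult: "is_mu_multiplicative scV n k br v I w J"
    and conn: "\<forall>i\<in>I. \<forall>i'\<in>I. connected_idx scV n k br v I w J i i'"
  shows "is_minimal scV n k br v I"
  unfolding is_minimal_def
proof (intro allI impI, elim conjE)
  interpret V: vector_space scV by fact
  fix U assume U: "k_submodule scV n k br U" "U \<noteq> {0}" "inherits_basis scV v I U"
  then obtain S where S: "S \<subseteq> I" "V.span (v ` S) = U"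
    unfolding inherits_basis_def by blast
  with U(2) obtain i where "i \<in> S" by fastforce
  have "v i' \<in> U" if "i' \<in> I" for i'
  proof (rule connected_idx_preserves[where P = "\<lambda>a. v a \<in> U"])
    show "connected_idx scV n k br v I w J i i'"
      using conn \<open>i \<in> S\<close> S(1) that by blast
    show "i \<in> I" "v i \<in> U"
      using \<open>i \<in> S\<close> S V.span_base by blast+
  qed (rule k_submodule_closed_under_mu[OF \<open>vector_space scV\<close> mu_mult U(1)])
  moreover have "V.subspace U"
    using U(1) by (simp add: k_submodule_def)
  ultimately have "V.span (v ` I) \<subseteq> U"
    by (intro V.span_minimal) auto
  then show "U = UNIV"
    using basis_v by (auto simp: is_basis_family_def)
qed

theorem mainTheorem9:
  fixes scV :: "'f::field \<Rightarrow> 'v::ab_group_add \<Rightarrow> 'v"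
    and scW :: "'f \<Rightarrow> 'w::ab_group_add \<Rightarrow> 'w"
    and n k :: nat
    and br :: "(nat \<Rightarrow> nat) \<Rightarrow> (nat \<Rightarrow> 'v) \<Rightarrow> (nat \<Rightarrow> 'w) \<Rightarrow> 'v"
    and v :: "'i \<Rightarrow> 'v" and I :: "'i set"
    and w :: "'j \<Rightarrow> 'w" and J :: "'j set"
  assumes "is_kmodule scV scW n k br"
    and "is_basis_family scV v I"
    and "is_basis_family scW w J"
    and "is_mu_multiplicative scV n k br v I w J"
  shows "is_minimal scV n k br v I \<longleftrightarrow>
         (\<forall>i\<in>I. \<forall>i'\<in>I. connected_idx scV n k br v I w J i i')"
proof
  have mult: "is_multiplicative scV n k br v I w J"
    using assms(4) by (simp add: is_mu_multiplicative_def)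
  show "is_minimal scV n k br v I \<Longrightarrow> \<forall>i\<in>I. \<forall>i'\<in>I. connected_idx scV n k br v I w J i i'"
    using connected_if_minimal[OF assms(1-3) mult] by blast
  have "vector_space scV"
    using assms(1) by (simp add: is_kmodule_def)
  then show "\<forall>i\<in>I. \<forall>i'\<in>I. connected_idx scV n k br v I w J i i' \<Longrightarrow> is_minimal scV n k br v I"
    using minimal_if_connected assms(2,4) by blast
qed

end
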